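(* Let $M$ be a monoid with identity $1$, and let $R_1=\{f\in M: fM=M\}$ be the $\mathcal{R}$-class of $1$ (the set of elements having a right inverse). If $M-R_1\neq\emptyset$ and $R_1\neq\{1\}$, then $\sigma_m(M)=\sigma_m^*(M)=\sigma_s(M)=2$.
   Context: A subsemigroup is a nonempty subset closed under the operation. For a monoid $M$: a submonoid is a subsemigroup containing the identity of $M$; a monoidal subsemigroup is a subsemigroup that is a monoid in its own right (its identity need not be that of $M$). $\sigma_s(M)$, $\sigma_m(M)$, $\sigma_m^*(M)$ denote the least positive integer $n$ such that $M$ is the union of $n$ proper subsemigroups, proper submonoids, respectively proper monoidal subsemigroups, or $\infty$ if no such finite $n$ exists. *)

theory Defs
  imports Main "HOL-Library.Extended_Nat"
begin

text \<open>The monoid M is modelled as a type of class monoid_mult (carrier = UNIV).\<close>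

definition subsemigroup :: "'a::monoid_mult set \<Rightarrow> bool" where
  "subsemigroup S \<longleftrightarrow> S \<noteq> {} \<and> (\<forall>x\<in>S. \<forall>y\<in>S. x * y \<in> S)"

definition submonoid :: "'a::monoid_mult set \<Rightarrow> bool" where
  "submonoid S \<longleftrightarrow> subsemigroup S \<and> 1 \<in> S"

definition monoidal_subsemigroup :: "'a::monoid_mult set \<Rightarrow> bool" where
  "monoidal_subsemigroup S \<longleftrightarrow> subsemigroup S \<and> (\<exists>e\<in>S. \<forall>x\<in>S. e * x = x \<and> x * e = x)"

text \<open>Least positive n such that UNIV is the union of n proper sets satisfying P; infinity if none.\<close>
definition cover_number :: "('a set \<Rightarrow> bool) \<Rightarrow> enat" where
  "cover_number P = Inf {enat n | n. n > 0 \<and>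
     (\<exists>S :: nat \<Rightarrow> 'a set. (\<forall>i<n. P (S i) \<and> S i \<noteq> UNIV) \<and> (\<Union>i<n. S i) = UNIV)}"

definition sigma_s :: "'a::monoid_mult itself \<Rightarrow> enat" where
  "sigma_s _ = cover_number (subsemigroup :: 'a set \<Rightarrow> bool)"

definition sigma_m :: "'a::monoid_mult itself \<Rightarrow> enat" where
  "sigma_m _ = cover_number (submonoid :: 'a set \<Rightarrow> bool)"

definition sigma_m_star :: "'a::monoid_mult itself \<Rightarrow> enat" where
  "sigma_m_star _ = cover_number (monoidal_subsemigroup :: 'a set \<Rightarrow> bool)"

definition R_one :: "'a::monoid_mult set" where
  "R_one = {f. range (\<lambda>x. f * x) = UNIV}"

end

theory Submission
  imports Defs
begin

text \<open>Right-invertibility is inherited by products and, conversely, a non-right-invertible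
  left factor makes every product non-right-invertible. Hence both the right-invertible
  elements and the remaining elements together with \<open>1\<close> are submonoids; they cover \<open>M\<close>, the
  hypotheses say exactly that both are proper, and no single proper subset covers \<open>M\<close>.\<close>

lemma two_le_cover_number: "2 \<le> cover_number P"
  unfolding cover_number_def
proof (rule Inf_greatest, clarify)
  fix n :: nat and S :: "nat \<Rightarrow> 'a set"
  assume "n > 0" and proper: "\<forall>i<n. P (S i) \<and> S i \<noteq> UNIV" and cover: "(\<Union>i<n. S i) = UNIV"
  have "n \<noteq> 1"
  proof
    assume "n = 1"
    with proper cover show False by (auto simp: lessThan_Suc)
  qed
  with \<open>n > 0\<close> show "2 \<le> enat n" by (simp add: numeral_eq_enat)
qed

lemma cover_number_le_2:
  assumes "P A" "P B" "A \<noteq> UNIV" "B \<noteq> UNIV" "A \<union> B = UNIV"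
  shows "cover_number P \<le> 2"
proof -
  let ?S = "\<lambda>i::nat. if i = 0 then A else B"
  have "{..<2::nat} = {0, 1}" by auto
  with assms have "(\<forall>i<2. P (?S i) \<and> ?S i \<noteq> UNIV) \<and> (\<Union>i<2. ?S i) = UNIV"
    by (simp add: Un_commute)
  then have "\<exists>S :: nat \<Rightarrow> 'a set. (\<forall>i<2. P (S i) \<and> S i \<noteq> UNIV) \<and> (\<Union>i<2. S i) = UNIV"
    by (rule exI[of _ ?S])
  then have "enat 2 \<in> {enat n | n. n > 0 \<and>
      (\<exists>S :: nat \<Rightarrow> 'a set. (\<forall>i<n. P (S i) \<and> S i \<noteq> UNIV) \<and> (\<Union>i<n. S i) = UNIV)}"
    by (intro CollectI exI[of _ 2] conjI) simp_all
  from Inf_lower[OF this] show ?thesis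
    unfolding cover_number_def enat_numeral .
qed

lemma cover_number_eq_2:
  assumes "P A" "P B" "A \<noteq> UNIV" "B \<noteq> UNIV" "A \<union> B = UNIV"
  shows "cover_number P = 2"
  using cover_number_le_2[OF assms] two_le_cover_number by (rule antisym)

lemma submonoid_imp_subsemigroup: "submonoid S \<Longrightarrow> subsemigroup S"
  unfolding submonoid_def by simp

lemma submonoid_imp_monoidal_subsemigroup: "submonoid S \<Longrightarrow> monoidal_subsemigroup S"
  unfolding submonoid_def monoidal_subsemigroup_def by (auto intro: bexI[of _ 1])

lemma R_one_iff_right_invertible: "f \<in> R_one \<longleftrightarrow> (\<exists>g. f * g = (1::'a::monoid_mult))"
proof
  assume "f \<in> R_one"
  then have "1 \<in> range (\<lambda>x. f * x)" by (simp add: R_one_def)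
  then show "\<exists>g. f * g = 1" by (metis imageE)
next
  assume "\<exists>g. f * g = 1"
  then obtain g where "f * g = 1" by blast
  then have "f * (g * y) = y" for y by (simp flip: mult.assoc)
  then have "y \<in> range (\<lambda>x. f * x)" for y by (metis rangeI)
  then show "f \<in> R_one" by (auto simp: R_one_def)
qed

lemma one_in_R_one: "1 \<in> R_one"
  by (auto simp: R_one_iff_right_invertible)

lemma mult_in_R_one: "x \<in> R_one \<Longrightarrow> y \<in> R_one \<Longrightarrow> x * y \<in> R_one"
proof -
  assume "x \<in> R_one" "y \<in> R_one"
  then obtain g h where "x * g = 1" "y * h = 1" by (auto simp: R_one_iff_right_invertible)
  then have "x * y * (h * g) = 1" by (simp add: mult.assoc flip: mult.assoc[of y])
  then show ?thesis by (auto simp: R_one_iff_right_invertible)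
qed

lemma mult_notin_R_one: "x \<notin> R_one \<Longrightarrow> x * y \<notin> R_one"
  by (auto simp: R_one_iff_right_invertible mult.assoc)

lemma submonoid_R_one: "submonoid (R_one :: 'a::monoid_mult set)"
  unfolding submonoid_def subsemigroup_def using one_in_R_one mult_in_R_one by blast

lemma submonoid_insert_one_Compl_R_one:
  "submonoid (insert 1 (- R_one) :: 'a::monoid_mult set)"
  unfolding submonoid_def subsemigroup_def using mult_notin_R_one by auto

theorem mainTheorem18:
  assumes "(UNIV :: 'a::monoid_mult set) - R_one \<noteq> {}"
    and "(R_one :: 'a set) \<noteq> {1}"
  shows "sigma_m TYPE('a) = 2 \<and> sigma_m_star TYPE('a) = 2 \<and> sigma_s TYPE('a) = 2"
proof -
  let ?A = "R_one :: 'a set" and ?B = "insert 1 (- R_one) :: 'a set"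
  have "?A \<noteq> UNIV" using assms(1) by blast
  moreover have "?B \<noteq> UNIV" using assms(2) one_in_R_one by blast
  moreover have "?A \<union> ?B = UNIV" by blast
  ultimately have "cover_number P = 2" if "P ?A" "P ?B" for P
    using cover_number_eq_2 that by blast
  then show ?thesis
    unfolding sigma_m_def sigma_m_star_def sigma_s_def
    using submonoid_R_one submonoid_insert_one_Compl_R_one
      submonoid_imp_monoidal_subsemigroup submonoid_imp_subsemigroup
    by blast
qed

end
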